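(* For every $n\in\mathbb{N}$ with $n>1$, the monoid $\mathrm{lps}_n$ has exponential growth.
   Context: Let $\mathcal{A}_n=\{1<2<\cdots<n\}$. An lPS tableau is a finite (possibly empty) sequence of nonempty bottom-justified columns of boxes filled with positive integers, such that the entries of each column are strictly decreasing from top to bottom and the bottom entries of the columns form a weakly increasing sequence from left to right. Right insertion of a symbol $a$ into an lPS tableau $B$: if $a$ is greater than or equal to every entry of the bottom row, append a new column consisting of $a$ at the right end; otherwise, let $z$ be the leftmost bottom-row entry with $z>a$ and put $a$ in a new box at the bottom of the column of $z$ (the previous entries of that column move up one box). For $w=w_1\cdots w_k$, $\mathfrak{R}_\ell(w)$ is obtained by starting with the empty tableau and right-inserting $w_1,\dots,w_k$ in order. The monoid $\mathrm{lps}_n$ is the quotient of the free monoid $\mathcal{A}_n^*$ by the congruence $u\equiv v\iff\mathfrak{R}_\ell(u)=\mathfrak{R}_\ell(v)$. For a monoid $M$ generated by a finite set $\Sigma$, the growth function $\gamma_M(N)$ is the number of elements of $M$ expressible as products of at most $N$ generators; $M$ has exponential growth if $\gamma_M$ is bounded below by $k^N$ for some $k$ (up to the usual equivalence of growth functions: $f\preceq g$ iff $f(N)\le g(cN)$ for some constant $c>0$ and all large $N$), a notion independent of the finite generating set. *)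

theory Defs
  imports Complex_Main
begin

text \<open>An lPS tableau is a list of columns (left to right); each column is a list of
  entries read from top to bottom (strictly decreasing), so the bottom entry of a
  column c is last c.\<close>

type_synonym lps_tableau = "nat list list"

definition lps_tableau :: "lps_tableau \<Rightarrow> bool" where
  "lps_tableau T \<longleftrightarrow> (\<forall>c \<in> set T. c \<noteq> [] \<and> sorted_wrt (>) c \<and> (\<forall>x\<in>set c. x > 0))
      \<and> sorted (map last T)"

fun lps_rins :: "lps_tableau \<Rightarrow> nat \<Rightarrow> lps_tableau" where
  "lps_rins [] a = [[a]]"
| "lps_rins (c # cs) a = (if a < last c then (c @ [a]) # cs else c # lps_rins cs a)"

definition lps_R :: "nat list \<Rightarrow> lps_tableau" where
  "lps_R w = foldl lps_rins [] w"

definition lps_words :: "nat \<Rightarrow> nat list set" where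
  "lps_words n = {w. set w \<subseteq> {1..n}}"

text \<open>The element of lps_n represented by w: its congruence class in A_n^*.\<close>

definition lps_class :: "nat \<Rightarrow> nat list \<Rightarrow> nat list set" where
  "lps_class n w = {v \<in> lps_words n. lps_R v = lps_R w}"

definition lps_growth :: "nat \<Rightarrow> nat \<Rightarrow> nat" where
  "lps_growth n N = card {lps_class n w | w. w \<in> lps_words n \<and> length w \<le> N}"

text \<open>Exponential growth: k^N \<preceq> gamma for some k > 1, i.e. k^N \<le> gamma(c N) for some
  constant c > 0 and all sufficiently large N.\<close>

definition exponential_growth :: "(nat \<Rightarrow> nat) \<Rightarrow> bool" where
  "exponential_growth \<gamma> \<longleftrightarrow>
     (\<exists>k::real. k > 1 \<and> (\<exists>c::nat. c > 0 \<and>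
        (\<forall>\<^sub>F N in sequentially. k ^ N \<le> real (\<gamma> (c * N)))))"

end

theory Submission
  imports Defs
begin

text \<open>Over the letters 1 < 2, the words 21 and 1 each produce a single column of the lPS
  tableau, and since every bottom entry stays 1 these columns are never disturbed by later
  insertions. So the 2^N words obtained by concatenating N such blocks have pairwise distinct
  tableaux, and all have length at most 2N.\<close>

lemma lps_rins_new_column:
  assumes "\<forall>c\<in>set T. last c \<le> a"
  shows "lps_rins T a = T @ [[a]]"
  using assms by (induction T) auto

lemma lps_rins_last_column:
  assumes "\<forall>c\<in>set T. last c \<le> b" and "b < a"
  shows "lps_rins (T @ [[a]]) b = T @ [[a, b]]"
  using assms by (induction T) auto

definition lps_block :: "bool \<Rightarrow> nat list" where
  "lps_block b = (if b then [2, 1] else [1])"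

definition lps_code :: "bool list \<Rightarrow> nat list" where
  "lps_code bs = concat (map lps_block bs)"

lemma foldl_lps_rins_code:
  assumes "\<forall>c\<in>set T. last c \<le> 1"
  shows "foldl lps_rins T (lps_code bs) = T @ map lps_block bs"
  using assms
proof (induction bs arbitrary: T)
  case Nil
  then show ?case by (simp add: lps_code_def)
next
  case (Cons b bs)
  have "\<forall>c\<in>set T. last c \<le> 2"
    using Cons.prems by fastforce
  then have "foldl lps_rins T (lps_block b) = T @ [lps_block b]"
    using Cons.prems lps_rins_new_column[of T 1] lps_rins_new_column[of T 2]
      lps_rins_last_column[of T 1 2]
    by (cases b) (simp_all add: lps_block_def)
  moreover have "\<forall>c\<in>set (T @ [lps_block b]). last c \<le> 1"
    using Cons.prems by (simp add: lps_block_def)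
  ultimately show ?case
    using Cons.IH by (simp add: lps_code_def)
qed

lemma lps_R_code: "lps_R (lps_code bs) = map lps_block bs"
  using foldl_lps_rins_code[of "[]" bs] by (simp add: lps_R_def)

lemma inj_lps_R_code: "inj (lps_R \<circ> lps_code)"
proof -
  have "inj lps_block"
    by (auto simp: inj_def lps_block_def)
  then show ?thesis
    by (auto simp: inj_def lps_R_code)
qed

lemma length_lps_code: "length (lps_code bs) \<le> 2 * length bs"
  by (induction bs) (auto simp: lps_code_def lps_block_def)

lemma lps_code_in_words: "n \<ge> 2 \<Longrightarrow> lps_code bs \<in> lps_words n"
  by (auto simp: lps_code_def lps_block_def lps_words_def)

lemma card_le_lps_growth:
  assumes "W \<subseteq> lps_words n" and "\<forall>w\<in>W. length w \<le> N" and "inj_on lps_R W"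
  shows "card W \<le> lps_growth n N"
proof -
  let ?S = "{lps_class n w | w. w \<in> lps_words n \<and> length w \<le> N}"
  have "?S = lps_class n ` {w. set w \<subseteq> {1..n} \<and> length w \<le> N}"
    by (auto simp: lps_words_def)
  then have "finite ?S"
    using finite_lists_length_le[of "{1..n}" N] by simp
  moreover have "lps_class n ` W \<subseteq> ?S"
    using assms(1,2) by auto
  moreover have "inj_on (lps_class n) W"
  proof (rule inj_onI)
    fix v w assume "v \<in> W" "w \<in> W" and "lps_class n v = lps_class n w"
    then have "v \<in> lps_class n w"
      using assms(1) by (auto simp: lps_class_def)
    then have "lps_R v = lps_R w"
      by (simp add: lps_class_def)
    then show "v = w"
      using \<open>v \<in> W\<close> \<open>w \<in> W\<close> assms(3) by (simp add: inj_on_def)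
  qed
  ultimately have "card (lps_class n ` W) \<le> card ?S"
    by (simp add: card_mono)
  then show ?thesis
    using card_image[OF \<open>inj_on (lps_class n) W\<close>] by (simp add: lps_growth_def)
qed

lemma lps_growth_ge_pow2:
  assumes "n \<ge> 2"
  shows "2 ^ N \<le> lps_growth n (2 * N)"
proof -
  let ?B = "{bs :: bool list. length bs = N}"
  have "card (lps_code ` ?B) = 2 ^ N"
    using card_lists_length_eq[of "UNIV :: bool set" N] inj_lps_R_code
    by (simp add: card_image inj_on_def)
  moreover have "card (lps_code ` ?B) \<le> lps_growth n (2 * N)"
  proof (rule card_le_lps_growth)
    show "inj_on lps_R (lps_code ` ?B)"
      using inj_lps_R_code by (auto simp: inj_on_def)
  qed (use assms lps_code_in_words length_lps_code in auto)
  ultimately show ?thesis by simp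
qed

lemma exponential_growthI:
  assumes "k > 1" and "c > 0" and "\<And>N. k ^ N \<le> real (\<gamma> (c * N))"
  shows "exponential_growth \<gamma>"
  using assms unfolding exponential_growth_def by (blast intro: always_eventually)

theorem corollary4p2:
  fixes n :: nat
  assumes "n > 1"
  shows "exponential_growth (lps_growth n)"
proof (rule exponential_growthI)
  fix N
  have "2 ^ N \<le> lps_growth n (2 * N)"
    using assms by (intro lps_growth_ge_pow2) simp
  then show "(2::real) ^ N \<le> real (lps_growth n (2 * N))"
    by (metis of_nat_le_iff of_nat_numeral of_nat_power)
qed simp_all

end
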